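(* Let $G$ be a tree on $k\ge 2$ vertices, $n\ge 1$, and let $e$ be an edge of $G$. Then $\Gamma^G_n$ has exactly one $e$-cycle of length $2^n$, and for each $0\le i<n$ the number of $e$-cycles of length $2^i$ in $\Gamma^G_n$ is $(k-2)k^{n-i-1}$. (Every $e$-cycle has length $2^i$ for some $0\le i\le n$.)
   Context: Let $G=(V,E)$ be a finite tree with vertex set $V$ of size $k$, and fix an orientation of each edge, so that each edge becomes an ordered pair $e=(s,t)$. Each oriented edge $e=(s,t)$ acts on the set $V^*$ of finite words over the alphabet $V$ by the recursive rule: $e(\emptyset)=\emptyset$, $e(sw)=t\,e(w)$, $e(tw)=sw$, and $e(xw)=xw$ for $x\in V\setminus\{s,t\}$ (words are read left to right, $w\in V^*$). This action preserves word length. For $n\ge 1$, the Schreier graph $\Gamma_n^G$ is the multigraph with vertex set $V^n$ having, for each $u\in V^n$ and each oriented edge $e$ of $G$, one edge joining $u$ and $e(u)$, labelled $e$ (a loop if $e(u)=u$). For an edge $e$ of $G$, the $e$-cycles of $\Gamma_n^G$ are the subgraphs formed by an orbit of $e$ on $V^n$ together with the edges labelled $e$ between its vertices; an orbit of size $m$ gives an $e$-cycle of length $m$ (a loop if $m=1$, a pair of parallel edges if $m=2$). *)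

theory Defs
  imports Main
begin

fun edge_act :: "'a \<times> 'a \<Rightarrow> 'a list \<Rightarrow> 'a list" where
  "edge_act e [] = []"
| "edge_act (s, t) (x # w) =
     (if x = s then t # edge_act (s, t) w
      else if x = t then s # w
      else x # w)"

definition adj :: "('a \<times> 'a) set \<Rightarrow> 'a \<Rightarrow> 'a \<Rightarrow> bool" where
  "adj E x y \<longleftrightarrow> (x, y) \<in> E \<or> (y, x) \<in> E"

definition oriented_tree :: "'a set \<Rightarrow> ('a \<times> 'a) set \<Rightarrow> bool" where
  "oriented_tree V E \<longleftrightarrow>
     finite V \<and> V \<noteq> {} \<and> E \<subseteq> V \<times> V \<and>
     (\<forall>(a, b) \<in> E. a \<noteq> b \<and> (b, a) \<notin> E) \<and>
     (\<forall>x\<in>V. \<forall>y\<in>V. (x, y) \<in> (E \<union> E\<inverse>)\<^sup>*) \<and>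
     \<not> (\<exists>cs. length cs \<ge> 3 \<and> distinct cs \<and> set cs \<subseteq> V \<and>
            (\<forall>i < length cs. adj E (cs ! i) (cs ! ((i + 1) mod length cs))))"

definition words :: "'a set \<Rightarrow> nat \<Rightarrow> 'a list set" where
  "words V n = {w. length w = n \<and> set w \<subseteq> V}"

definition edge_orbit :: "'a \<times> 'a \<Rightarrow> 'a list \<Rightarrow> 'a list set" where
  "edge_orbit e u = {(edge_act e ^^ m) u | m. True}"

(* the e-cycles of Gamma_n, represented by their vertex sets (orbits of e on V^n);
   an e-cycle has length m iff its orbit has m elements *)
definition e_cycles :: "'a set \<Rightarrow> nat \<Rightarrow> 'a \<times> 'a \<Rightarrow> 'a list set set" where
  "e_cycles V n e = edge_orbit e ` words V n"

definition num_e_cycles :: "'a set \<Rightarrow> nat \<Rightarrow> 'a \<times> 'a \<Rightarrow> nat \<Rightarrow> nat" where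
  "num_e_cycles V n e m = card {C \<in> e_cycles V n e. card C = m}"

end

theory Submission
  imports Defs
begin

text \<open>
Let \<open>e = (s, t)\<close>. Split a word as \<open>p r\<close>, where \<open>p\<close> is its longest prefix over \<open>{s, t}\<close>.
Reading \<open>p\<close> as a binary numeral, least significant digit first, with \<open>s = 1\<close> and \<open>t = 0\<close>,
the action of \<open>e\<close> is exactly "add one modulo \<open>2^|p|\<close>": the carry travels through the
leading \<open>s\<close>'s, turning them into \<open>t\<close>'s, and stops at the first \<open>t\<close>, which becomes \<open>s\<close>.
Since \<open>r\<close> is empty or starts outside \<open>{s, t}\<close>, it is never touched. Hence the orbit of
\<open>p r\<close> consists of all \<open>q r\<close> with \<open>q\<close> over \<open>{s, t}\<close> and \<open>|q| = |p|\<close>; it has \<open>2^|p|\<close> elements, and the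
\<open>e\<close>-cycles of length \<open>2^i\<close> correspond bijectively to the admissible tails \<open>r\<close> of
length \<open>n - i\<close>, which are counted directly.
\<close>

fun bin_word :: "'a \<Rightarrow> 'a \<Rightarrow> nat \<Rightarrow> nat \<Rightarrow> 'a list" where
  "bin_word s t 0 m = []"
| "bin_word s t (Suc j) m = (if odd m then s else t) # bin_word s t j (m div 2)"

lemma length_bin_word [simp]: "length (bin_word s t j m) = j"
  by (induction j arbitrary: m) auto

lemma set_bin_word: "set (bin_word s t j m) \<subseteq> {s, t}"
  by (induction j arbitrary: m) auto

lemma bin_word_eq_iff:
  assumes "s \<noteq> t"
  shows "bin_word s t j m = bin_word s t j m' \<longleftrightarrow> m mod 2 ^ j = m' mod 2 ^ j"
proof (induction j arbitrary: m m')
  case 0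
  then show ?case by simp
next
  case (Suc j)
  have "bin_word s t (Suc j) m = bin_word s t (Suc j) m' \<longleftrightarrow>
        m mod 2 = m' mod 2 \<and> m div 2 mod 2 ^ j = m' div 2 mod 2 ^ j"
    using Suc.IH assms by (auto simp: mod2_eq_if)
  also have "\<dots> \<longleftrightarrow> m mod 2 ^ Suc j = m' mod 2 ^ Suc j"
  proof -
    have "2 * a + b = 2 * c + d \<longleftrightarrow> b = d \<and> a = c" if "b < 2" "d < 2" for a b c d :: nat
      using that by presburger
    then show ?thesis
      unfolding power_Suc mod_mult2_eq by (metis mod_less_divisor zero_less_numeral)
  qed
  finally show ?case .
qed

lemma bin_word_mod:
  assumes "s \<noteq> t"
  shows "bin_word s t j (m mod 2 ^ j) = bin_word s t j m"
  using bin_word_eq_iff [OF assms] by simp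

lemma inj_on_bin_word:
  assumes "s \<noteq> t"
  shows "inj_on (bin_word s t j) {..<2 ^ j}"
  using bin_word_eq_iff [OF assms] by (auto intro: inj_onI)

lemma bin_word_surj:
  assumes "s \<noteq> t" and "set p \<subseteq> {s, t}"
  obtains m where "p = bin_word s t (length p) m"
proof -
  let ?j = "length p"
  let ?L = "{q. set q \<subseteq> {s, t} \<and> length q = ?j}"
  have "bin_word s t ?j ` {..<2 ^ ?j} \<subseteq> ?L"
    using set_bin_word by fastforce
  moreover have "card (bin_word s t ?j ` {..<2 ^ ?j}) = 2 ^ ?j"
    using assms(1) by (simp add: card_image inj_on_bin_word)
  moreover have "card ?L = 2 ^ ?j"
    using card_lists_length_eq [of "{s, t}" ?j] assms(1) by (simp add: numeral_2_eq_2)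
  ultimately have "bin_word s t ?j ` {..<2 ^ ?j} = ?L"
    by (simp add: card_subset_eq finite_lists_length_eq)
  then show thesis
    using assms(2) that by blast
qed

definition carry_stop :: "'a \<Rightarrow> 'a \<Rightarrow> 'a list \<Rightarrow> bool" where
  "carry_stop s t r \<longleftrightarrow> r = [] \<or> hd r \<notin> {s, t}"

lemma edge_act_bin_word:
  assumes "s \<noteq> t" and "carry_stop s t r"
  shows "edge_act (s, t) (bin_word s t j m @ r) = bin_word s t j (Suc m) @ r"
proof (induction j arbitrary: m)
  case 0
  then show ?case
    using assms(2) by (cases r) (auto simp: carry_stop_def)
next
  case (Suc j)
  then show ?case
    using assms(1) by (cases "even m") auto
qed

lemma funpow_edge_act_bin_word:
  assumes "s \<noteq> t" and "carry_stop s t r"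
  shows "(edge_act (s, t) ^^ a) (bin_word s t j m @ r) = bin_word s t j (m + a) @ r"
  by (induction a) (simp_all add: edge_act_bin_word [OF assms])

definition counter_orbit :: "'a \<Rightarrow> 'a \<Rightarrow> nat \<Rightarrow> 'a list \<Rightarrow> 'a list set" where
  "counter_orbit s t j r = (\<lambda>m. bin_word s t j m @ r) ` {..<2 ^ j}"

lemma edge_orbit_bin_word:
  assumes "s \<noteq> t" and "carry_stop s t r"
  shows "edge_orbit (s, t) (bin_word s t j m @ r) = counter_orbit s t j r"
proof -
  have "edge_orbit (s, t) (bin_word s t j m @ r) = (\<lambda>a. bin_word s t j (m + a) @ r) ` UNIV"
    unfolding edge_orbit_def funpow_edge_act_bin_word [OF assms] by auto
  also have "\<dots> = (\<lambda>c. bin_word s t j c @ r) ` ((\<lambda>a. (m + a) mod 2 ^ j) ` UNIV)"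
    by (simp add: image_image bin_word_mod [OF assms(1)])
  also have "(\<lambda>a. (m + a) mod 2 ^ j) ` UNIV = {..<2 ^ j}"
  proof (intro equalityI subsetI)
    fix c :: nat
    assume "c \<in> {..<2 ^ j}"
    have "m + (c + (2 ^ j - 1) * m) = c + 2 ^ j * m"
      by (simp add: mult_eq_if)
    with \<open>c \<in> {..<2 ^ j}\<close> have "(m + (c + (2 ^ j - 1) * m)) mod 2 ^ j = c"
      by (simp only:) simp
    then show "c \<in> (\<lambda>a. (m + a) mod 2 ^ j) ` UNIV"
      by (metis rangeI)
  qed auto
  finally show ?thesis
    unfolding counter_orbit_def .
qed

lemma card_counter_orbit:
  assumes "s \<noteq> t"
  shows "card (counter_orbit s t j r) = 2 ^ j"
proof -
  have "inj_on (\<lambda>m. bin_word s t j m @ r) {..<2 ^ j}"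
    using inj_on_bin_word [OF assms] by (auto simp: inj_on_def)
  then show ?thesis
    unfolding counter_orbit_def by (simp add: card_image)
qed

lemma counter_orbit_eq_imp_eq:
  assumes "counter_orbit s t j r = counter_orbit s t j r'"
  shows "r = r'"
proof -
  have "bin_word s t j 0 @ r \<in> counter_orbit s t j r'"
    using assms unfolding counter_orbit_def by auto
  then show ?thesis
    unfolding counter_orbit_def by auto
qed

lemma carry_stop_dropWhile: "carry_stop s t (dropWhile (\<lambda>x. x \<in> {s, t}) w)"
  unfolding carry_stop_def by (metis hd_dropWhile)

lemma edge_orbit_eq_counter_orbit:
  assumes "s \<noteq> t"
  shows "edge_orbit (s, t) w =
    counter_orbit s t (length (takeWhile (\<lambda>x. x \<in> {s, t}) w)) (dropWhile (\<lambda>x. x \<in> {s, t}) w)"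
proof -
  let ?p = "takeWhile (\<lambda>x. x \<in> {s, t}) w"
  have "set ?p \<subseteq> {s, t}"
    by (auto dest: set_takeWhileD)
  then obtain m where "?p = bin_word s t (length ?p) m"
    using bin_word_surj [OF assms] by blast
  then have "w = bin_word s t (length ?p) m @ dropWhile (\<lambda>x. x \<in> {s, t}) w"
    by (metis takeWhile_dropWhile_id)
  then show ?thesis
    using edge_orbit_bin_word [OF assms carry_stop_dropWhile] by metis
qed

definition stop_words :: "'a set \<Rightarrow> 'a \<Rightarrow> 'a \<Rightarrow> nat \<Rightarrow> 'a list set" where
  "stop_words V s t l = {r \<in> words V l. carry_stop s t r}"

lemma e_cycles_eq_counter_orbits:
  assumes "s \<noteq> t" and "s \<in> V" and "t \<in> V"
  shows "e_cycles V n (s, t) =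
    (\<lambda>(j, r). counter_orbit s t j r) ` (SIGMA j:{..n}. stop_words V s t (n - j))"
proof (intro equalityI subsetI)
  fix C
  assume "C \<in> e_cycles V n (s, t)"
  then obtain w where w: "w \<in> words V n" and C: "C = edge_orbit (s, t) w"
    unfolding e_cycles_def by blast
  let ?j = "length (takeWhile (\<lambda>x. x \<in> {s, t}) w)"
  let ?r = "dropWhile (\<lambda>x. x \<in> {s, t}) w"
  have "length w = ?j + length ?r"
    by (metis length_append takeWhile_dropWhile_id)
  then have "?j \<le> n" and "?r \<in> stop_words V s t (n - ?j)"
    using w carry_stop_dropWhile [of s t w] set_dropWhileD [of _ _ w]
    unfolding stop_words_def words_def by auto
  then show "C \<in> (\<lambda>(j, r). counter_orbit s t j r) ` (SIGMA j:{..n}. stop_words V s t (n - j))"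
    using C edge_orbit_eq_counter_orbit [OF assms(1)] by fastforce
next
  fix C
  assume "C \<in> (\<lambda>(j, r). counter_orbit s t j r) ` (SIGMA j:{..n}. stop_words V s t (n - j))"
  then obtain j r where j: "j \<le> n" and r: "r \<in> stop_words V s t (n - j)"
    and C: "C = counter_orbit s t j r"
    by blast
  have "bin_word s t j 0 @ r \<in> words V n"
    using j r set_bin_word [of s t j 0] assms(2,3) unfolding stop_words_def words_def by auto
  moreover have "C = edge_orbit (s, t) (bin_word s t j 0 @ r)"
    using C r edge_orbit_bin_word [OF assms(1)] unfolding stop_words_def by simp
  ultimately show "C \<in> e_cycles V n (s, t)"
    unfolding e_cycles_def by blast
qed

lemma num_e_cycles_eq_card_stop_words:
  assumes "s \<noteq> t" and "s \<in> V" and "t \<in> V" and "i \<le> n"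
  shows "num_e_cycles V n (s, t) (2 ^ i) = card (stop_words V s t (n - i))"
proof -
  have "{C \<in> e_cycles V n (s, t). card C = 2 ^ i} = counter_orbit s t i ` stop_words V s t (n - i)"
    using assms by (auto simp: e_cycles_eq_counter_orbits card_counter_orbit)
  moreover have "inj_on (counter_orbit s t i) (stop_words V s t (n - i))"
    by (auto intro: inj_onI counter_orbit_eq_imp_eq)
  ultimately show ?thesis
    unfolding num_e_cycles_def by (simp add: card_image)
qed

lemma stop_words_0: "stop_words V s t 0 = {[]}"
  by (auto simp: stop_words_def words_def carry_stop_def)

lemma card_stop_words_Suc:
  assumes "finite V" and "s \<noteq> t" and "s \<in> V" and "t \<in> V"
  shows "card (stop_words V s t (Suc l)) = (card V - 2) * card V ^ l"
proof -
  have "stop_words V s t (Suc l) = (\<lambda>(x, r). x # r) ` ((V - {s, t}) \<times> words V l)"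
    by (auto simp: stop_words_def words_def carry_stop_def length_Suc_conv)
  moreover have "inj_on (\<lambda>(x, r). x # r) ((V - {s, t}) \<times> words V l)"
    by (auto intro: inj_onI)
  moreover have "card (words V l) = card V ^ l"
    using card_lists_length_eq [OF assms(1)] unfolding words_def by (simp add: conj_commute)
  moreover have "card (V - {s, t}) = card V - 2"
    using assms by (simp add: card_Diff_subset)
  ultimately show ?thesis
    by (simp add: card_image card_cartesian_product)
qed

lemma oriented_tree_edge:
  assumes "oriented_tree V E" and "(s, t) \<in> E"
  shows "finite V" and "s \<noteq> t" and "s \<in> V" and "t \<in> V"
  using assms unfolding oriented_tree_def by auto

theorem proposition3p3:
  fixes V :: "'a set" and E :: "('a \<times> 'a) set" and k n :: nat and e :: "'a \<times> 'a"
  assumes "oriented_tree V E" and "card V = k" and "k \<ge> 2" and "n \<ge> 1" and "e \<in> E"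
  shows "num_e_cycles V n e (2 ^ n) = 1 \<and>
         (\<forall>i < n. num_e_cycles V n e (2 ^ i) = (k - 2) * k ^ (n - i - 1)) \<and>
         (\<forall>C \<in> e_cycles V n e. \<exists>i \<le> n. card C = 2 ^ i)"
proof -
  obtain s t where e: "e = (s, t)"
    by (cases e)
  note edge = oriented_tree_edge [OF assms(1) assms(5) [unfolded e]]
  have "num_e_cycles V n e (2 ^ n) = 1"
    using num_e_cycles_eq_card_stop_words [of s t V n n] edge by (simp add: e stop_words_0)
  moreover have "num_e_cycles V n e (2 ^ i) = (k - 2) * k ^ (n - i - 1)" if "i < n" for i
  proof -
    have "n - i = Suc (n - i - 1)"
      using that by simp
    then show ?thesis
      using num_e_cycles_eq_card_stop_words [of s t V i n] card_stop_words_Suc [OF edge] edge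
        that assms(2) by (simp add: e)
  qed
  moreover have "\<forall>C \<in> e_cycles V n e. \<exists>i \<le> n. card C = 2 ^ i"
    using edge by (auto simp: e e_cycles_eq_counter_orbits card_counter_orbit)
  ultimately show ?thesis
    by blast
qed

end
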